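(* Let $\mathcal{C}\subset\mathbb{R}^n$ be a nonempty compact convex set with Euclidean diameter $D$ and let $f$ be continuously differentiable with $\nabla f$ $L$-Lipschitz on $\mathcal{C}$. Fix $T\in\mathbb{N}$, $T\ge1$, and let $\{x^t\}_{t=0}^T$ be generated by the Boosted Stochastic Frank–Wolfe algorithm (described in the context) with constant step decay $\eta_t=\frac1{\sqrt T}$, where the estimators $m^t$ and some (possibly random) auxiliary sequence $\{\sigma_t\}$ satisfy the estimator condition below with $\rho_1,\rho_2\in(0,1]$ and $A,B,C,E\ge0$. Then $$\mathbb{E}\Big[\min_{0\le t\le T-1}\mathrm{Gap}(x^t)\Big]=\mathcal{O}\Big(\frac1{\sqrt T}+\sqrt C\Big),$$ i.e., there is a constant $K_0$ not depending on $T$ such that the left side is at most $K_0\big(\frac1{\sqrt T}+\sqrt C\big)$. In particular, if $C=0$ the rate is $\mathcal{O}(1/\sqrt T)$.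
   Context: Norms are Euclidean; $D=\max_{x,y\in\mathcal{C}}\|x-y\|$; $\mathrm{Gap}(x)=\max_{s\in\mathcal{C}}\langle\nabla f(x),x-s\rangle$. $\mathrm{lmo}(v)$ denotes a (fixed selection of a) point of $\arg\min_{s\in\mathcal{C}}\langle s,v\rangle$. $\mathrm{align}(d,\hat d)=\frac{\langle d,\hat d\rangle}{\|d\|\|\hat d\|}$ if $\hat d\ne0$, $-1$ if $\hat d=0$. Algorithm: inputs $K\ge1$, $\delta\in(0,1]$, step decays $\eta_t>0$, a vector $m^{\rm init}$; $x^0=\mathrm{lmo}(m^{\rm init})$. At iteration $t$, a (random) estimator $m^t$ of $\nabla f(x^t)$ is formed from sampled stochastic gradients. Boosting: $\psi^0=0$, $\Lambda_t=0$, $k=0$; while $k\le K-1$: $r^k=-m^t-\psi^k$, $v^k=\mathrm{lmo}(-r^k)$; if $k=0$, $s^t=v^0$; if $\psi^k\ne0$, $u^k$ is whichever of $v^k-x^t$, $-\psi^k/\|\psi^k\|$ has the larger inner product with $r^k$, else $u^k=v^k-x^t$; if $u^k=0$ stop; $\lambda_k=\langle r^k,u^k\rangle/\|u^k\|^2$, $\phi^k=\psi^k+\lambda_ku^k$; if $\mathrm{align}(-m^t,\phi^k)-\mathrm{align}(-m^t,\psi^k)\ge\delta$ then $\psi^{k+1}=\phi^k$, $\Lambda_t\leftarrow\Lambda_t+\lambda_k$ if $u^k=v^k-x^t$ and $\Lambda_t\leftarrow\Lambda_t(1-\lambda_k/\|\psi^k\|)$ otherwise, $k\leftarrow k+1$;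 else stop. With $\psi$ the last accepted candidate, $\tilde d^t=\psi/\Lambda_t$ if $\Lambda_t\ne0$, else $0$. $\gamma_t=\min\{\eta_t\|s^t-x^t\|/\|\tilde d^t\|,1\}$ if $\tilde d^t\ne0$, else $1$. If $\gamma_t<1$: $x^{t+1}=x^t+\gamma_t\tilde d^t$; otherwise $x^{t+1}=x^t+\eta_t(s^t-x^t)$. Notation: $\Delta^t=m^t-\nabla f(x^t)$; $\mathbb{E}$ full expectation; $\mathbb{E}_t[\cdot]=\mathbb{E}[\cdot\mid\sigma(x^0,\dots,x^t)]$. Estimator condition: for all $t\ge1$, $\mathbb{E}_{t-1}[\|\Delta^t\|^2]\le(1-\rho_1)\|\Delta^{t-1}\|^2+A\sigma_{t-1}^2+\eta_{t-1}^2BD^2+C$ and $\mathbb{E}_{t-1}[\sigma_t^2]\le(1-\rho_2)\sigma_{t-1}^2+\eta_{t-1}^2ED^2$. *)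

theory Defs
  imports "HOL-Probability.Probability"
begin

definition align :: "'v::real_inner \<Rightarrow> 'v \<Rightarrow> real" where
  "align d dh = (if dh = 0 then -1 else inner d dh / (norm d * norm dh))"

definition fw_gap :: "('v::real_inner \<Rightarrow> 'v) \<Rightarrow> 'v set \<Rightarrow> 'v \<Rightarrow> real" where
  "fw_gap grad S x = (SUP s\<in>S. inner (grad x) (x - s))"

definition is_lmo :: "'v::real_inner set \<Rightarrow> ('v \<Rightarrow> 'v) \<Rightarrow> bool" where
  "is_lmo S lmo = (\<forall>v. lmo v \<in> S \<and> (\<forall>s\<in>S. inner (lmo v) v \<le> inner s v))"

fun boost_loop :: "('v::real_inner \<Rightarrow> 'v) \<Rightarrow> 'v \<Rightarrow> 'v \<Rightarrow> real \<Rightarrow> nat \<Rightarrow> 'v \<Rightarrow> real \<Rightarrow> 'v \<times> real" where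
  "boost_loop lmo m x \<delta> 0 \<psi> \<Lambda> = (\<psi>, \<Lambda>)"
| "boost_loop lmo m x \<delta> (Suc n) \<psi> \<Lambda> =
     (let r = - m - \<psi>;
          v = lmo (- r);
          g = v - x;
          fw = (\<psi> = 0 \<or> inner r g \<ge> inner r (- (1 / norm \<psi>) *\<^sub>R \<psi>));
          u = (if fw then g else - (1 / norm \<psi>) *\<^sub>R \<psi>)
      in if u = 0 then (\<psi>, \<Lambda>)
         else (let lam = inner r u / (norm u)\<^sup>2;
                   \<phi> = \<psi> + lam *\<^sub>R u
               in if align (- m) \<phi> - align (- m) \<psi> \<ge> \<delta>
                  then boost_loop lmo m x \<delta> n \<phi>
                         (if fw then \<Lambda> + lam else \<Lambda> * (1 - lam / norm \<psi>))
                  else (\<psi>, \<Lambda>)))"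

definition bsfw_step :: "('v::real_inner \<Rightarrow> 'v) \<Rightarrow> nat \<Rightarrow> real \<Rightarrow> real \<Rightarrow> 'v \<Rightarrow> 'v \<Rightarrow> 'v" where
  "bsfw_step lmo K \<delta> \<eta> x m =
     (let (\<psi>, \<Lambda>) = boost_loop lmo m x \<delta> K 0 0;
          s = lmo m;
          d = (if \<Lambda> \<noteq> 0 then (1 / \<Lambda>) *\<^sub>R \<psi> else 0);
          \<gamma> = (if d \<noteq> 0 then min (\<eta> * norm (s - x) / norm d) 1 else 1)
      in if \<gamma> < 1 then x + \<gamma> *\<^sub>R d else x + \<eta> *\<^sub>R (s - x))"

definition nat_filt :: "'a measure \<Rightarrow> (nat \<Rightarrow> 'a \<Rightarrow> 'b::topological_space) \<Rightarrow> nat \<Rightarrow> 'a measure" where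
  "nat_filt M X t = sigma (space M) (\<Union>i\<le>t. {X i -` A \<inter> space M | A. A \<in> sets borel})"

end

theory Submission
  imports Defs
begin

(* Gradient pursuit only accepts directions d = psi / Lambda with x + d in C that are at least as
   well aligned with -m as the Frank-Wolfe direction s - x.  Rescaled to the Frank-Wolfe step
   length eta |s - x|, such a direction inherits both guarantees of a plain Frank-Wolfe step,
   <m, x' - x> <= eta <m, s - x> and |x' - x| <= eta |s - x|.  With the smoothness bound this gives
     eta Gap(x^t) <= f(x^t) - f(x^(t+1)) + 2 eta D |Delta^t| + |L| eta^2 D^2.
   Summing over t, splitting 2 |Delta^t| <= |Delta^t|^2 / kappa + kappa with kappa = eta + sqrt C,
   and bounding the sum of E |Delta^t|^2 by the Lyapunov function E |Delta^t|^2 + (2A/rho2) E sigma_t^2,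
   which contracts at rate min rho1 (rho2/2) up to an additive O(eta^2 + C), yields the rate for
   eta = 1 / sqrt T. *)

lemma align_zero [simp]: "align d 0 = -1"
  by (simp add: align_def)

lemma align_scaleR_pos:
  fixes v :: "'v::real_inner"
  assumes "0 < c"
  shows "align d (c *\<^sub>R v) = align d v"
  using assms by (auto simp: align_def)

lemma align_pos_iff_inner_pos:
  fixes d v :: "'v::real_inner"
  shows "0 < align d v \<longleftrightarrow> 0 < inner d v"
  by (cases "d = 0 \<or> v = 0") (auto simp: align_def zero_less_divide_iff mult_less_0_iff)

lemma align_scaleR_le:
  fixes v :: "'v::real_inner"
  assumes "0 < align d v"
  shows "align d (c *\<^sub>R v) \<le> align d v"
proof -
  have "v \<noteq> 0" using assms by (auto simp: align_def)
  consider "0 < c" | "c = 0" | "c < 0" by linarith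
  then show ?thesis
  proof cases
    case 3
    then have "align d (c *\<^sub>R v) = - align d v"
      using \<open>v \<noteq> 0\<close> by (auto simp: align_def)
    then show ?thesis using assms by simp
  qed (use assms in \<open>auto simp: align_scaleR_pos align_def\<close>)
qed

lemma align_le_imp_inner_le:
  fixes d a b :: "'v::real_inner"
  assumes "align d a \<le> align d b" "b \<noteq> 0"
  shows "inner d a \<le> inner d ((norm a / norm b) *\<^sub>R b)"
proof (cases "d = 0 \<or> a = 0")
  case False
  then have "norm d * (inner d a / (norm d * norm a)) \<le> norm d * (inner d b / (norm d * norm b))"
    using assms by (intro mult_left_mono) (auto simp: align_def)
  then have "inner d a / norm a \<le> inner d b / norm b"
    using False by simp
  then show ?thesis
    using False \<open>b \<noteq> 0\<close> by (simp add: field_simps)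
qed auto

lemma lmo_mem: "is_lmo S lmo \<Longrightarrow> lmo v \<in> S"
  by (simp add: is_lmo_def)

lemma lmo_le: "is_lmo S lmo \<Longrightarrow> s \<in> S \<Longrightarrow> inner (lmo v) v \<le> inner s v"
  by (simp add: is_lmo_def)

lemma inner_lmo_diff_nonpos: "is_lmo S lmo \<Longrightarrow> x \<in> S \<Longrightarrow> inner v (lmo v - x) \<le> 0"
  using lmo_le[of S lmo x v] by (simp add: inner_diff_right inner_commute)

lemma convex_boost_update:
  fixes S :: "'v::real_vector set"
  assumes "convex S" "0 < \<Lambda>" "x + (1 / \<Lambda>) *\<^sub>R \<psi> \<in> S" "v \<in> S" "0 \<le> lam"
  shows "x + (1 / (\<Lambda> + lam)) *\<^sub>R (\<psi> + lam *\<^sub>R (v - x)) \<in> S"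
proof -
  have "x + (1 / (\<Lambda> + lam)) *\<^sub>R (\<psi> + lam *\<^sub>R (v - x))
      = (\<Lambda> / (\<Lambda> + lam)) *\<^sub>R (x + (1 / \<Lambda>) *\<^sub>R \<psi>) + (lam / (\<Lambda> + lam)) *\<^sub>R v"
    using assms(2,5) by (simp add: algebra_simps divide_simps)
      (simp add: scaleR_add_left[symmetric] add_divide_distrib[symmetric])
  also have "\<dots> \<in> S"
    using assms by (intro convexD) (auto simp: add_divide_distrib[symmetric])
  finally show ?thesis .
qed

(* (psi, Lambda) is the state of the pursuit loop; the boosted direction of the paper is psi / Lambda. *)
definition boost_invariant :: "'v::real_inner set \<Rightarrow> 'v \<Rightarrow> 'v \<Rightarrow> 'v \<Rightarrow> 'v \<times> real \<Rightarrow> bool" where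
  "boost_invariant S m x s =
     (\<lambda>(\<psi>, \<Lambda>). (\<psi> = 0 \<and> \<Lambda> = 0) \<or>
       (0 < \<Lambda> \<and> x + (1 / \<Lambda>) *\<^sub>R \<psi> \<in> S \<and>
        align (- m) (s - x) \<le> align (- m) \<psi> \<and> 0 < align (- m) \<psi>))"

lemma boost_invariant_first_round:
  fixes S :: "'v::real_inner set"
  assumes "is_lmo S lmo" "0 < lam" "0 < inner (- m) (lmo m - x)"
  shows "boost_invariant S m x (lmo m) (lam *\<^sub>R (lmo m - x), lam)"
  using assms lmo_mem[OF assms(1)]
  by (simp add: boost_invariant_def align_scaleR_pos align_pos_iff_inner_pos mult_pos_neg)

lemma boost_invariant_fw_round:
  fixes S :: "'v::real_inner set"
  assumes "convex S" "v \<in> S" "0 \<le> lam" "boost_invariant S m x s (\<psi>, \<Lambda>)" "\<psi> \<noteq> 0"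
    and "align (- m) \<psi> \<le> align (- m) (\<psi> + lam *\<^sub>R (v - x))"
  shows "boost_invariant S m x s (\<psi> + lam *\<^sub>R (v - x), \<Lambda> + lam)"
  using assms convex_boost_update[OF assms(1) _ _ assms(2,3)] by (auto simp: boost_invariant_def)

lemma boost_loop_invariant:
  fixes S :: "'v::real_inner set"
  assumes lmo: "is_lmo S lmo" and "convex S" "x \<in> S" "0 < \<delta>"
  shows "boost_invariant S m x (lmo m) (\<psi>, \<Lambda>) \<Longrightarrow>
    boost_invariant S m x (lmo m) (boost_loop lmo m x \<delta> n \<psi> \<Lambda>)"
proof (induction n arbitrary: \<psi> \<Lambda>)
  case (Suc n)
  define r where "r = - m - \<psi>"
  define g where "g = lmo (- r) - x"
  define fw where "fw = (\<psi> = 0 \<or> inner r g \<ge> inner r (- (1 / norm \<psi>) *\<^sub>R \<psi>))"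
  define u where "u = (if fw then g else - (1 / norm \<psi>) *\<^sub>R \<psi>)"
  define lam where "lam = inner r u / (norm u)\<^sup>2"
  define \<phi> where "\<phi> = \<psi> + lam *\<^sub>R u"
  define \<Lambda>' where "\<Lambda>' = (if fw then \<Lambda> + lam else \<Lambda> * (1 - lam / norm \<psi>))"
  have loop: "boost_loop lmo m x \<delta> (Suc n) \<psi> \<Lambda> =
     (if u = 0 \<or> \<not> \<delta> \<le> align (- m) \<phi> - align (- m) \<psi> then (\<psi>, \<Lambda>)
      else boost_loop lmo m x \<delta> n \<phi> \<Lambda>')"
    unfolding boost_loop.simps Let_def r_def[symmetric] g_def[symmetric] fw_def[symmetric]
      u_def[symmetric] lam_def[symmetric] \<phi>_def[symmetric] \<Lambda>'_def[symmetric]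
    by simp
  have lam_nonneg: "0 \<le> lam" if fw
    using inner_lmo_diff_nonpos[OF lmo \<open>x \<in> S\<close>, of "- r"] that
    by (simp add: lam_def u_def g_def)
  have "boost_invariant S m x (lmo m) (\<phi>, \<Lambda>')"
    if accepted: "\<delta> \<le> align (- m) \<phi> - align (- m) \<psi>"
  proof (cases "\<psi> = 0")
    case True
    then have "\<Lambda> = 0" and fw and u: "u = lmo m - x" and \<phi>: "\<phi> = lam *\<^sub>R (lmo m - x)"
      using Suc.prems by (auto simp: boost_invariant_def fw_def u_def g_def r_def \<phi>_def)
    have "\<phi> \<noteq> 0"
      using accepted \<open>\<psi> = 0\<close> \<open>0 < \<delta>\<close> by auto
    then have "0 < lam"
      using lam_nonneg[OF \<open>fw\<close>] \<phi> by force
    moreover have "0 < inner (- m) (lmo m - x)"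
      using \<open>0 < lam\<close> \<open>\<psi> = 0\<close> u by (simp add: lam_def r_def divide_less_0_iff)
    ultimately show ?thesis
      using boost_invariant_first_round[OF lmo] \<phi> \<open>fw\<close> \<open>\<Lambda> = 0\<close> by (simp add: \<Lambda>'_def)
  next
    case False
    then have "0 < align (- m) \<psi>"
      using Suc.prems by (auto simp: boost_invariant_def)
    (* a drop step only rescales psi, which cannot raise its alignment, so it is never accepted *)
    have fw
    proof (rule ccontr)
      assume "\<not> fw"
      then have "\<phi> = (1 - lam / norm \<psi>) *\<^sub>R \<psi>"
        by (simp add: \<phi>_def u_def algebra_simps)
      then show False
        using accepted align_scaleR_le[OF \<open>0 < align (- m) \<psi>\<close>] \<open>0 < \<delta>\<close> by (smt (verit))
    qed
    then show ?thesis
      using boost_invariant_fw_round[OF \<open>convex S\<close> lmo_mem[OF lmo] lam_nonneg Suc.prems False]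
        accepted \<open>0 < \<delta>\<close> by (simp add: \<phi>_def \<Lambda>'_def u_def g_def)
  qed
  then show ?case
    using loop Suc by auto
qed simp

lemma bsfw_step_cases:
  fixes S :: "'v::real_inner set"
  assumes lmo: "is_lmo S lmo" and "convex S" "x \<in> S" "0 < \<delta>"
  obtains (boosted) d where "d \<noteq> 0" "x + d \<in> S" "align (- m) (lmo m - x) \<le> align (- m) d"
      "\<eta> * norm (lmo m - x) / norm d < 1"
      "bsfw_step lmo K \<delta> \<eta> x m = x + (\<eta> * norm (lmo m - x) / norm d) *\<^sub>R d"
  | (frank_wolfe) "bsfw_step lmo K \<delta> \<eta> x m = x + \<eta> *\<^sub>R (lmo m - x)"
proof -
  obtain \<psi> \<Lambda> where loop: "boost_loop lmo m x \<delta> K 0 0 = (\<psi>, \<Lambda>)"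
    by fastforce
  have inv: "boost_invariant S m x (lmo m) (\<psi>, \<Lambda>)"
    using boost_loop_invariant[OF assms, of m 0 0 K] loop by (simp add: boost_invariant_def)
  define d where "d = (if \<Lambda> \<noteq> 0 then (1 / \<Lambda>) *\<^sub>R \<psi> else 0)"
  define \<gamma> where "\<gamma> = (if d \<noteq> 0 then min (\<eta> * norm (lmo m - x) / norm d) 1 else 1)"
  have step: "bsfw_step lmo K \<delta> \<eta> x m =
      (if \<gamma> < 1 then x + \<gamma> *\<^sub>R d else x + \<eta> *\<^sub>R (lmo m - x))"
    by (simp only: bsfw_step_def loop Let_def prod.case d_def[symmetric] \<gamma>_def[symmetric])
  show ?thesis
  proof (cases "\<gamma> < 1")
    case True
    then have "d \<noteq> 0" and \<gamma>: "\<gamma> = \<eta> * norm (lmo m - x) / norm d"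
      by (auto simp: \<gamma>_def)
    then have "0 < \<Lambda>" "x + d \<in> S" "align (- m) (lmo m - x) \<le> align (- m) d"
      using inv by (auto simp: boost_invariant_def d_def align_scaleR_pos split: if_splits)
    then show ?thesis
      using boosted \<open>d \<noteq> 0\<close> True step \<gamma> by simp
  qed (use frank_wolfe step in simp)
qed

lemma aligned_step_props:
  fixes S :: "'v::real_inner set"
  assumes "convex S" "x \<in> S" "x + d \<in> S" "d \<noteq> 0" "align (- m) g \<le> align (- m) d"
    and "0 \<le> \<eta>" "\<eta> * norm g / norm d < 1"
  defines "x' \<equiv> x + (\<eta> * norm g / norm d) *\<^sub>R d"
  shows "x' \<in> S" "inner m (x' - x) \<le> \<eta> * inner m g" "norm (x' - x) = \<eta> * norm g"
proof -
  define \<gamma> where "\<gamma> = \<eta> * norm g / norm d"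
  have "0 \<le> \<gamma>" "\<gamma> < 1"
    using assms(6,7) by (simp_all add: \<gamma>_def)
  have "x' = (1 - \<gamma>) *\<^sub>R x + \<gamma> *\<^sub>R (x + d)"
    by (simp add: x'_def \<gamma>_def algebra_simps)
  also have "\<dots> \<in> S"
    using assms(1-3) \<open>0 \<le> \<gamma>\<close> \<open>\<gamma> < 1\<close> by (intro convexD) auto
  finally show "x' \<in> S" .
  have "inner (- m) g \<le> inner (- m) ((norm g / norm d) *\<^sub>R d)"
    using align_le_imp_inner_le[OF assms(5,4)] .
  then have "\<eta> * inner m ((norm g / norm d) *\<^sub>R d) \<le> \<eta> * inner m g"
    using \<open>0 \<le> \<eta>\<close> by (intro mult_left_mono) auto
  then show "inner m (x' - x) \<le> \<eta> * inner m g"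
    by (simp add: x'_def)
  show "norm (x' - x) = \<eta> * norm g"
    using \<open>0 \<le> \<eta>\<close> \<open>d \<noteq> 0\<close> by (simp add: x'_def)
qed

lemma bsfw_step_props:
  fixes S :: "'v::real_inner set" and m :: 'v and K :: nat
  assumes lmo: "is_lmo S lmo" and "convex S" "x \<in> S" "0 < \<delta>" "0 \<le> \<eta>" "\<eta> \<le> 1"
  defines "x' \<equiv> bsfw_step lmo K \<delta> \<eta> x m"
  shows bsfw_step_mem: "x' \<in> S"
    and bsfw_step_inner_le: "inner m (x' - x) \<le> \<eta> * inner m (lmo m - x)"
    and bsfw_step_norm_le: "norm (x' - x) \<le> \<eta> * norm (lmo m - x)"
proof -
  have "x' \<in> S \<and> inner m (x' - x) \<le> \<eta> * inner m (lmo m - x) \<and> norm (x' - x) \<le> \<eta> * norm (lmo m - x)"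
  proof (cases rule: bsfw_step_cases[OF assms(1-4), of m \<eta> K, case_names boosted frank_wolfe])
    case (boosted d)
    then show ?thesis
      using aligned_step_props[OF \<open>convex S\<close> \<open>x \<in> S\<close> boosted(2,1,3) \<open>0 \<le> \<eta>\<close> boosted(4)]
      by (simp add: x'_def)
  next
    case frank_wolfe
    have "x + \<eta> *\<^sub>R (lmo m - x) = (1 - \<eta>) *\<^sub>R x + \<eta> *\<^sub>R lmo m"
      by (simp add: algebra_simps)
    also have "\<dots> \<in> S"
      using assms lmo_mem by (intro convexD) auto
    finally show ?thesis
      using frank_wolfe \<open>0 \<le> \<eta>\<close> by (simp add: x'_def)
  qed
  then show "x' \<in> S" "inner m (x' - x) \<le> \<eta> * inner m (lmo m - x)"
      "norm (x' - x) \<le> \<eta> * norm (lmo m - x)"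
    by auto
qed

lemma onorm_inner_le: "onorm (\<lambda>h. inner v h) \<le> norm v"
  by (rule onorm_bound) (simp_all add: Cauchy_Schwarz_ineq2)

lemma lipschitz_gradient_linearization_bound:
  fixes f :: "'v::real_inner \<Rightarrow> real"
  assumes "convex S" "S \<subseteq> U"
    and f_deriv: "\<forall>y\<in>U. (f has_derivative (\<lambda>h. inner (grad y) h)) (at y)"
    and lip: "\<forall>y\<in>S. \<forall>z\<in>S. norm (grad y - grad z) \<le> L * norm (y - z)"
    and "a \<in> S" "b \<in> S"
  shows "f b - f a - inner (grad a) (b - a) \<le> \<bar>L\<bar> * (norm (b - a))\<^sup>2"
proof -
  have seg: "closed_segment a b \<subseteq> S"
    using closed_segment_subset \<open>convex S\<close> \<open>a \<in> S\<close> \<open>b \<in> S\<close> by blast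
  have "norm (f b - f a - inner (grad a) (b - a)) \<le> norm (b - a) * (\<bar>L\<bar> * norm (b - a))"
  proof (rule differentiable_bound_linearization[where S = "closed_segment a b"
        and f' = "\<lambda>y h. inner (grad y) h"])
    show "a + t *\<^sub>R (b - a) \<in> closed_segment a b" if "t \<in> {0..1}" for t
      using that by (auto simp: closed_segment_def algebra_simps intro!: exI[of _ t])
    show "(f has_derivative (\<lambda>h. inner (grad y) h)) (at y within closed_segment a b)"
      if "y \<in> closed_segment a b" for y
      using that seg \<open>S \<subseteq> U\<close> f_deriv by (blast intro: has_derivative_at_withinI)
    show "onorm ((\<lambda>h. inner (grad y) h) - (\<lambda>h. inner (grad a) h)) \<le> \<bar>L\<bar> * norm (b - a)"
      if y: "y \<in> closed_segment a b" for y
    proof -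
      have "onorm ((\<lambda>h. inner (grad y) h) - (\<lambda>h. inner (grad a) h)) \<le> norm (grad y - grad a)"
        using onorm_inner_le[of "grad y - grad a"] by (simp add: fun_diff_def inner_diff_left)
      also have "\<dots> \<le> \<bar>L\<bar> * norm (y - a)"
        using lip y seg \<open>a \<in> S\<close> abs_ge_self[of L] mult_right_mono[of L "\<bar>L\<bar>" "norm (y - a)"]
        by fastforce
      also have "\<dots> \<le> \<bar>L\<bar> * norm (b - a)"
        using segment_bound1[OF y] by (simp add: mult_left_mono)
      finally show ?thesis .
    qed
  qed simp
  then show ?thesis
    by (simp add: power2_eq_square mult_ac)
qed

lemma fw_gap_le_lmo:
  fixes S :: "'v::real_inner set"
  assumes lmo: "is_lmo S lmo" and "bounded S" "S \<noteq> {}" "x \<in> S"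
  shows "fw_gap grad S x \<le> inner m (x - lmo m) + diameter S * norm (m - grad x)"
  unfolding fw_gap_def
proof (rule cSUP_least)
  fix z assume "z \<in> S"
  have "inner (grad x) (x - z) = inner m (x - z) - inner (m - grad x) (x - z)"
    by (simp add: inner_diff_left)
  also have "\<dots> \<le> inner m (x - lmo m) + norm (m - grad x) * norm (x - z)"
    using lmo_le[OF lmo \<open>z \<in> S\<close>, of m] Cauchy_Schwarz_ineq2[of "m - grad x" "x - z"]
    by (simp add: inner_diff_right inner_commute)
  also have "\<dots> \<le> inner m (x - lmo m) + diameter S * norm (m - grad x)"
    using diameter_bounded_bound[OF \<open>bounded S\<close> \<open>x \<in> S\<close> \<open>z \<in> S\<close>]
    by (simp add: dist_norm mult.commute[of "norm (m - grad x)"] mult_right_mono)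
  finally show "inner (grad x) (x - z) \<le> inner m (x - lmo m) + diameter S * norm (m - grad x)" .
qed (use \<open>S \<noteq> {}\<close> in simp)

lemma bsfw_step_gap_bound:
  fixes S :: "'v::real_inner set" and f :: "'v \<Rightarrow> real" and m :: 'v and K :: nat
  assumes "S \<noteq> {}" "bounded S" "convex S" "S \<subseteq> U"
    and f_deriv: "\<forall>y\<in>U. (f has_derivative (\<lambda>h. inner (grad y) h)) (at y)"
    and lip: "\<forall>y\<in>S. \<forall>z\<in>S. norm (grad y - grad z) \<le> L * norm (y - z)"
    and lmo: "is_lmo S lmo" and "x \<in> S" "0 < \<delta>" "0 \<le> \<eta>" "\<eta> \<le> 1"
  defines "x' \<equiv> bsfw_step lmo K \<delta> \<eta> x m"
  shows "\<eta> * fw_gap grad S x \<le> f x - f x' + 2 * \<eta> * diameter S * norm (m - grad x)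
           + \<bar>L\<bar> * \<eta>\<^sup>2 * (diameter S)\<^sup>2"
proof -
  define D where "D = diameter S"
  define a where "a = norm (m - grad x)"
  have "x' \<in> S"
    using bsfw_step_mem[OF lmo assms(3,8-11)] by (simp add: x'_def)
  have "norm (x' - x) \<le> \<eta> * norm (lmo m - x)"
    using bsfw_step_norm_le[OF lmo assms(3,8-11)] by (simp add: x'_def)
  also have "\<dots> \<le> \<eta> * D"
    using diameter_bounded_bound[OF \<open>bounded S\<close> lmo_mem[OF lmo] \<open>x \<in> S\<close>] \<open>0 \<le> \<eta>\<close>
    by (simp add: D_def dist_norm mult_left_mono)
  finally have short_step: "norm (x' - x) \<le> \<eta> * D" .
  have "\<eta> * fw_gap grad S x \<le> \<eta> * (inner m (x - lmo m) + D * a)"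
    using fw_gap_le_lmo[OF lmo assms(2,1,8)] \<open>0 \<le> \<eta>\<close> by (simp add: D_def a_def mult_left_mono)
  also have "\<dots> \<le> - inner m (x' - x) + \<eta> * D * a"
    using bsfw_step_inner_le[OF lmo assms(3,8-11)]
    by (simp add: x'_def algebra_simps inner_diff_right)
  also have "\<dots> = - inner (grad x) (x' - x) - inner (m - grad x) (x' - x) + \<eta> * D * a"
    by (simp add: inner_diff_left)
  also have "\<dots> \<le> - inner (grad x) (x' - x) + 2 * \<eta> * D * a"
    using Cauchy_Schwarz_ineq2[of "m - grad x" "x' - x"] short_step
      mult_left_mono[OF short_step norm_ge_zero[of "m - grad x"]]
    by (simp add: a_def mult.commute abs_le_iff)
  also have "\<dots> \<le> f x - f x' + \<bar>L\<bar> * (norm (x' - x))\<^sup>2 + 2 * \<eta> * D * a"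
    using lipschitz_gradient_linearization_bound[OF \<open>convex S\<close> \<open>S \<subseteq> U\<close> f_deriv lip \<open>x \<in> S\<close> \<open>x' \<in> S\<close>]
    by simp
  also have "\<dots> \<le> f x - f x' + \<bar>L\<bar> * (\<eta> * D)\<^sup>2 + 2 * \<eta> * D * a"
    using short_step by (simp add: mult_left_mono power_mono)
  finally show ?thesis
    by (simp add: D_def a_def power_mult_distrib algebra_simps)
qed

lemma bsfw_iterates_mem:
  fixes S :: "'v::real_inner set"
  assumes "is_lmo S lmo" "convex S" "0 < \<delta>" "0 \<le> \<eta>" "\<eta> \<le> 1"
    and "X 0 \<in> S" and "\<And>t. X (Suc t) = bsfw_step lmo K \<delta> \<eta> (X t) (m t)"
  shows "X t \<in> S"
  by (induction t) (use assms bsfw_step_mem in auto)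

lemma two_mult_le_square_div_add:
  fixes a \<kappa> :: real
  assumes "0 < \<kappa>"
  shows "2 * a \<le> a\<^sup>2 / \<kappa> + \<kappa>"
proof -
  have "2 * a * \<kappa> \<le> a\<^sup>2 + \<kappa>\<^sup>2"
    using sum_squares_bound[of a \<kappa>] by (simp add: mult.commute)
  then show ?thesis
    using assms by (simp add: field_simps power2_eq_square)
qed

lemma bsfw_min_gap_bound:
  fixes S :: "'v::real_inner set" and f :: "'v \<Rightarrow> real" and K T :: nat
  assumes "S \<noteq> {}" "bounded S" "convex S" "S \<subseteq> U"
    and f_deriv: "\<forall>y\<in>U. (f has_derivative (\<lambda>h. inner (grad y) h)) (at y)"
    and lip: "\<forall>y\<in>S. \<forall>z\<in>S. norm (grad y - grad z) \<le> L * norm (y - z)"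
    and f_bound: "\<forall>y\<in>S. \<bar>f y\<bar> \<le> F"
    and lmo: "is_lmo S lmo" and "0 < \<delta>" "0 < \<eta>" "\<eta> \<le> 1" "1 \<le> T" "0 < \<kappa>"
    and X: "X 0 \<in> S" "\<And>t. X (Suc t) = bsfw_step lmo K \<delta> \<eta> (X t) (m t)"
  shows "Min ((\<lambda>t. fw_gap grad S (X t)) ` {0..<T})
    \<le> 2 * F / (\<eta> * T) + \<bar>L\<bar> * \<eta> * (diameter S)\<^sup>2 + diameter S * \<kappa>
      + diameter S / (\<kappa> * T) * (\<Sum>t<T. (norm (m t - grad (X t)))\<^sup>2)"
proof -
  define D where "D = diameter S"
  define G where "G t = fw_gap grad S (X t)" for t
  define a where "a t = norm (m t - grad (X t))" for t
  have X_mem: "X t \<in> S" for t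
    using bsfw_iterates_mem[OF lmo \<open>convex S\<close> \<open>0 < \<delta>\<close> _ \<open>\<eta> \<le> 1\<close> X] \<open>0 < \<eta>\<close> by simp
  have "0 \<le> D"
    using diameter_bounded_bound[OF \<open>bounded S\<close> X(1) X(1)] by (simp add: D_def)
  have step: "\<eta> * G t \<le> f (X t) - f (X (Suc t)) + \<eta> * D / \<kappa> * (a t)\<^sup>2
      + (\<eta> * D * \<kappa> + \<bar>L\<bar> * \<eta>\<^sup>2 * D\<^sup>2)" for t
  proof -
    have "\<eta> * D * (2 * a t) \<le> \<eta> * D * ((a t)\<^sup>2 / \<kappa> + \<kappa>)"
      using two_mult_le_square_div_add[OF \<open>0 < \<kappa>\<close>] \<open>0 < \<eta>\<close> \<open>0 \<le> D\<close> by (simp add: mult_left_mono)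
    then show ?thesis
      using bsfw_step_gap_bound[OF assms(1-6) lmo X_mem[of t] \<open>0 < \<delta>\<close> _ \<open>\<eta> \<le> 1\<close>, of K "m t"]
        X(2)[of t] \<open>0 < \<eta>\<close>
      by (simp add: G_def D_def a_def algebra_simps)
  qed
  have "real T * (\<eta> * Min (G ` {..<T})) \<le> \<eta> * (\<Sum>t<T. G t)"
    using sum_bounded_below[of "{..<T}" "Min (G ` {..<T})" G] \<open>0 < \<eta>\<close>
    by (simp add: mult_left_mono mult.left_commute)
  also have "\<dots> \<le> (\<Sum>t<T. f (X t) - f (X (Suc t)) + \<eta> * D / \<kappa> * (a t)\<^sup>2
      + (\<eta> * D * \<kappa> + \<bar>L\<bar> * \<eta>\<^sup>2 * D\<^sup>2))"
    unfolding sum_distrib_left by (intro sum_mono step)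
  also have "\<dots> = f (X 0) - f (X T) + \<eta> * D / \<kappa> * (\<Sum>t<T. (a t)\<^sup>2)
      + real T * (\<eta> * D * \<kappa> + \<bar>L\<bar> * \<eta>\<^sup>2 * D\<^sup>2)"
    by (simp add: sum.distrib sum_distrib_left sum_lessThan_telescope'[of "\<lambda>t. f (X t)"])
  also have "\<dots> \<le> 2 * F + \<eta> * D / \<kappa> * (\<Sum>t<T. (a t)\<^sup>2)
      + real T * (\<eta> * D * \<kappa> + \<bar>L\<bar> * \<eta>\<^sup>2 * D\<^sup>2)"
    using f_bound X_mem[of 0] X_mem[of T] by (smt (verit))
  finally have "real T * (\<eta> * Min (G ` {..<T})) \<le> \<dots>" .
  then show ?thesis
    using \<open>1 \<le> T\<close> \<open>0 < \<eta>\<close> \<open>0 < \<kappa>\<close>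
    by (simp add: G_def D_def a_def atLeast0LessThan field_simps power2_eq_square)
qed

lemma contraction_sum_bound:
  fixes W :: "nat \<Rightarrow> real"
  assumes "\<And>t. W (Suc t) \<le> (1 - \<rho>) * W t + c"
  shows "\<rho> * (\<Sum>t<n. W t) + W n \<le> W 0 + real n * c"
proof (induction n)
  case (Suc n)
  then show ?case
    using assms[of n] by (simp add: algebra_simps)
qed simp

lemma coupled_contraction_sum_bound:
  fixes v s :: "nat \<Rightarrow> real"
  assumes "\<And>t. 0 \<le> v t" "\<And>t. 0 \<le> s t"
    and "0 < \<rho>1" "\<rho>1 \<le> 1" "0 < \<rho>2" "\<rho>2 \<le> 1" "0 \<le> A"
    and v_rec: "\<And>t. v (Suc t) \<le> (1 - \<rho>1) * v t + A * s t + c"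
    and s_rec: "\<And>t. s (Suc t) \<le> (1 - \<rho>2) * s t + e"
  shows "min \<rho>1 (\<rho>2 / 2) * (\<Sum>t<T. v t)
    \<le> v 0 + (2 * A / \<rho>2) * s 0 + real T * (c + (2 * A / \<rho>2) * e)"
proof -
  define \<alpha> where "\<alpha> = 2 * A / \<rho>2"
  define \<rho> where "\<rho> = min \<rho>1 (\<rho>2 / 2)"
  define W where "W t = v t + \<alpha> * s t" for t
  have "0 \<le> \<alpha>" "0 < \<rho>"
    using assms(3,5,7) by (simp_all add: \<alpha>_def \<rho>_def)
  have "W (Suc t) \<le> (1 - \<rho>) * W t + (c + \<alpha> * e)" for t
  proof -
    have "W (Suc t) \<le> (1 - \<rho>1) * v t + A * s t + c + \<alpha> * ((1 - \<rho>2) * s t + e)"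
      using v_rec[of t] mult_left_mono[OF s_rec[of t] \<open>0 \<le> \<alpha>\<close>] by (simp add: W_def)
    also have "\<dots> = (1 - \<rho>1) * v t + \<alpha> * (1 - \<rho>2 / 2) * s t + (c + \<alpha> * e)"
      using \<open>0 < \<rho>2\<close> by (simp add: \<alpha>_def field_simps)
    also have "\<dots> \<le> (1 - \<rho>) * v t + \<alpha> * (1 - \<rho>) * s t + (c + \<alpha> * e)"
      using assms(1,2) \<open>0 \<le> \<alpha>\<close>
      by (intro add_mono mult_right_mono mult_left_mono) (auto simp: \<rho>_def)
    finally show ?thesis
      by (simp add: W_def algebra_simps)
  qed
  then have "\<rho> * (\<Sum>t<T. W t) + W T \<le> W 0 + real T * (c + \<alpha> * e)"
    by (rule contraction_sum_bound)
  moreover have "\<rho> * (\<Sum>t<T. v t) \<le> \<rho> * (\<Sum>t<T. W t)" "0 \<le> W T"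
    using assms(1,2) \<open>0 \<le> \<alpha>\<close> \<open>0 < \<rho>\<close> by (auto intro!: mult_left_mono sum_mono simp: W_def)
  ultimately show ?thesis
    by (simp add: \<rho>_def \<alpha>_def W_def)
qed

lemma nat_filt_subalgebra:
  assumes "\<And>t. X t \<in> borel_measurable M"
  shows "subalgebra M (nat_filt M X t)"
proof -
  define G where "G = (\<Union>i\<le>t. {X i -` A \<inter> space M | A. A \<in> sets borel})"
  have "G \<subseteq> Pow (space M)"
    by (auto simp: G_def)
  moreover have "G \<subseteq> sets M"
    using assms by (auto simp: G_def intro!: measurable_sets)
  ultimately show ?thesis
    unfolding subalgebra_def nat_filt_def G_def[symmetric]
    by (simp add: sets_measure_of space_measure_of sets.sigma_sets_subset)
qed

lemma (in finite_measure) integral_le_of_real_cond_exp_le: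
  assumes "subalgebra M F" "integrable M Y" "integrable M Z"
    and "AE \<omega> in M. real_cond_exp M F Y \<omega> \<le> Z \<omega>"
  shows "integral\<^sup>L M Y \<le> integral\<^sup>L M Z"
proof -
  interpret sigma_finite_subalgebra M F
    using assms(1) finite_measure_axioms
    by (intro finite_measure_subalgebra_is_sigma_finite)
      (simp add: finite_measure_subalgebra_def finite_measure_subalgebra_axioms_def)
  have "integral\<^sup>L M Y = integral\<^sup>L M (real_cond_exp M F Y)"
    using real_cond_exp_int(2)[OF assms(2)] by simp
  also have "\<dots> \<le> integral\<^sup>L M Z"
    using real_cond_exp_int(1)[OF assms(2)] assms(3,4) by (rule integral_mono_AE)
  finally show ?thesis .
qed

lemma (in prob_space) expected_coupled_contraction_sum_bound:
  fixes a s :: "nat \<Rightarrow> 'a \<Rightarrow> real"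
  assumes "\<And>t. subalgebra M (F t)"
    and "\<And>t. integrable M (a t)" "\<And>t. integrable M (s t)"
    and "\<And>t \<omega>. 0 \<le> a t \<omega>" "\<And>t \<omega>. 0 \<le> s t \<omega>"
    and "0 < \<rho>1" "\<rho>1 \<le> 1" "0 < \<rho>2" "\<rho>2 \<le> 1" "0 \<le> A"
    and "\<And>t. AE \<omega> in M. real_cond_exp M (F t) (a (Suc t)) \<omega> \<le> (1 - \<rho>1) * a t \<omega> + A * s t \<omega> + c"
    and "\<And>t. AE \<omega> in M. real_cond_exp M (F t) (s (Suc t)) \<omega> \<le> (1 - \<rho>2) * s t \<omega> + e"
  shows "min \<rho>1 (\<rho>2 / 2) * (\<Sum>t<T. expectation (a t))
    \<le> expectation (a 0) + (2 * A / \<rho>2) * expectation (s 0) + real T * (c + (2 * A / \<rho>2) * e)"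
proof (rule coupled_contraction_sum_bound)
  fix t
  have "expectation (a (Suc t)) \<le> expectation (\<lambda>\<omega>. (1 - \<rho>1) * a t \<omega> + A * s t \<omega> + c)"
    using assms by (intro integral_le_of_real_cond_exp_le) auto
  then show "expectation (a (Suc t)) \<le> (1 - \<rho>1) * expectation (a t) + A * expectation (s t) + c"
    using assms(2,3) by (simp add: prob_space)
  have "expectation (s (Suc t)) \<le> expectation (\<lambda>\<omega>. (1 - \<rho>2) * s t \<omega> + e)"
    using assms by (intro integral_le_of_real_cond_exp_le) auto
  then show "expectation (s (Suc t)) \<le> (1 - \<rho>2) * expectation (s t) + e"
    using assms(3) by (simp add: prob_space)
qed (use assms in auto)

lemma bsfw_rate_arith:
  fixes T :: nat and C F D L \<rho> W V \<eta> :: real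
  assumes "1 \<le> T" "0 \<le> C" "0 \<le> F" "0 \<le> D" "0 < \<rho>" "0 \<le> W" and V: "\<rho> * V \<le> W + T * C"
  defines "\<eta> \<equiv> 1 / sqrt T"
  shows "2 * F / (\<eta> * T) + \<bar>L\<bar> * \<eta> * D\<^sup>2 + D * (\<eta> + sqrt C) + D / ((\<eta> + sqrt C) * T) * V
    \<le> (2 * F + \<bar>L\<bar> * D\<^sup>2 + D + D * (W + 1) / \<rho>) * (\<eta> + sqrt C)"
proof -
  define \<kappa> where "\<kappa> = \<eta> + sqrt C"
  have "0 < T" using assms(1) by simp
  have "0 < \<eta>" "1 / (\<eta> * T) = \<eta>"
    using \<open>0 < T\<close> by (auto simp: \<eta>_def field_simps real_sqrt_mult[symmetric])
  have "\<eta> \<le> \<kappa>" "sqrt C \<le> \<kappa>" "0 < \<kappa>"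
    using \<open>0 < \<eta>\<close> \<open>0 \<le> C\<close> by (auto simp: \<kappa>_def add_pos_nonneg)
  have "W / (\<kappa> * T) \<le> W / (\<eta> * T)"
    using \<open>\<eta> \<le> \<kappa>\<close> \<open>0 < \<eta>\<close> \<open>0 < T\<close> \<open>0 \<le> W\<close> by (intro divide_left_mono) auto
  also have "\<dots> = W * \<eta>"
    using \<open>1 / (\<eta> * T) = \<eta>\<close> by (metis times_divide_eq_right mult.right_neutral)
  finally have W_term: "W / (\<kappa> * T) \<le> W * \<eta>" .
  have "C \<le> sqrt C * \<kappa>"
    using \<open>sqrt C \<le> \<kappa>\<close> \<open>0 \<le> C\<close> mult_left_mono[OF \<open>sqrt C \<le> \<kappa>\<close>, of "sqrt C"]
    by (simp add: power2_eq_square[symmetric])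
  then have C_term: "C / \<kappa> \<le> sqrt C"
    using \<open>0 < \<kappa>\<close> by (simp add: divide_le_eq)
  have "D / (\<kappa> * T) * V \<le> D / (\<kappa> * T) * ((W + T * C) / \<rho>)"
    using V \<open>0 < \<rho>\<close> \<open>0 \<le> D\<close> \<open>0 < \<kappa>\<close> \<open>0 < T\<close> by (intro mult_left_mono) (auto simp: field_simps)
  also have "\<dots> = D / \<rho> * (W / (\<kappa> * T) + C / \<kappa>)"
    using \<open>0 < \<kappa>\<close> \<open>0 < T\<close> by (simp add: field_simps)
  also have "\<dots> \<le> D / \<rho> * (W * \<eta> + sqrt C)"
    using W_term C_term \<open>0 \<le> D\<close> \<open>0 < \<rho>\<close> by (intro mult_left_mono) auto
  finally have V_term: "D / (\<kappa> * T) * V \<le> D / \<rho> * (W * \<eta> + sqrt C)" .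
  have F_term: "2 * F / (\<eta> * T) = 2 * F * \<eta>"
    using \<open>1 / (\<eta> * T) = \<eta>\<close> by (metis times_divide_eq_right mult.right_neutral)
  have "(2 * F + \<bar>L\<bar> * D\<^sup>2 + D + D * W / \<rho>) * \<eta> + (D + D / \<rho>) * sqrt C
      = 2 * F * \<eta> + \<bar>L\<bar> * \<eta> * D\<^sup>2 + D * \<kappa> + D / \<rho> * (W * \<eta> + sqrt C)"
    using \<open>0 < \<rho>\<close> by (simp add: \<kappa>_def field_simps)
  then have "2 * F / (\<eta> * T) + \<bar>L\<bar> * \<eta> * D\<^sup>2 + D * \<kappa> + D / (\<kappa> * T) * V
      \<le> (2 * F + \<bar>L\<bar> * D\<^sup>2 + D + D * W / \<rho>) * \<eta> + (D + D / \<rho>) * sqrt C"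
    using F_term V_term by linarith
  also have "\<dots> \<le> (2 * F + \<bar>L\<bar> * D\<^sup>2 + D + D * (W + 1) / \<rho>) * \<eta>
      + (2 * F + \<bar>L\<bar> * D\<^sup>2 + D + D * (W + 1) / \<rho>) * sqrt C"
    using assms(2-6) \<open>0 < \<eta>\<close>
    by (intro add_mono mult_right_mono) (auto simp: field_simps)
  finally show ?thesis
    by (simp add: \<kappa>_def distrib_left)
qed

lemma bsfw_expected_error_sum_bound:
  fixes T :: nat and M :: "'a measure" and x m :: "nat \<Rightarrow> 'a \<Rightarrow> 'v::real_inner"
    and \<sigma> :: "nat \<Rightarrow> 'a \<Rightarrow> real"
  assumes "prob_space M" "1 \<le> T"
    and \<rho>: "0 < \<rho>1" "\<rho>1 \<le> 1" "0 < \<rho>2" "\<rho>2 \<le> 1" and "0 \<le> A"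
    and meas: "\<And>t. x t \<in> borel_measurable M"
    and int: "\<forall>t. integrable M (\<lambda>\<omega>. (norm (m t \<omega> - grad (x t \<omega>)))\<^sup>2)
            \<and> integrable M (\<lambda>\<omega>. (\<sigma> t \<omega>)\<^sup>2)"
    and err_rec: "\<forall>t\<ge>1. AE \<omega> in M.
          real_cond_exp M (nat_filt M x (t - 1)) (\<lambda>\<omega>. (norm (m t \<omega> - grad (x t \<omega>)))\<^sup>2) \<omega>
            \<le> (1 - \<rho>1) * (norm (m (t - 1) \<omega> - grad (x (t - 1) \<omega>)))\<^sup>2 + A * (\<sigma> (t - 1) \<omega>)\<^sup>2
              + (1 / sqrt T)\<^sup>2 * B * D\<^sup>2 + C"
    and aux_rec: "\<forall>t\<ge>1. AE \<omega> in M.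
          real_cond_exp M (nat_filt M x (t - 1)) (\<lambda>\<omega>. (\<sigma> t \<omega>)\<^sup>2) \<omega>
            \<le> (1 - \<rho>2) * (\<sigma> (t - 1) \<omega>)\<^sup>2 + (1 / sqrt T)\<^sup>2 * E * D\<^sup>2"
    and V0: "prob_space.expectation M (\<lambda>\<omega>. (norm (m 0 \<omega> - grad (x 0 \<omega>)))\<^sup>2) \<le> V0"
    and S0: "prob_space.expectation M (\<lambda>\<omega>. (\<sigma> 0 \<omega>)\<^sup>2) \<le> S0"
  shows "min \<rho>1 (\<rho>2 / 2) * (\<Sum>t<T. prob_space.expectation M (\<lambda>\<omega>. (norm (m t \<omega> - grad (x t \<omega>)))\<^sup>2))
    \<le> V0 + 2 * A / \<rho>2 * S0 + (B + 2 * A / \<rho>2 * E) * D\<^sup>2 + real T * C"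
proof -
  interpret prob_space M by fact
  define \<eta> where "\<eta> = 1 / sqrt T"
  define \<alpha> where "\<alpha> = 2 * A / \<rho>2"
  define err where "err t \<omega> = (norm (m t \<omega> - grad (x t \<omega>)))\<^sup>2" for t \<omega>
  define aux where "aux t \<omega> = (\<sigma> t \<omega>)\<^sup>2" for t \<omega>
  have "min \<rho>1 (\<rho>2 / 2) * (\<Sum>t<T. expectation (err t))
      \<le> expectation (err 0) + \<alpha> * expectation (aux 0)
        + real T * ((\<eta>\<^sup>2 * B * D\<^sup>2 + C) + \<alpha> * (\<eta>\<^sup>2 * E * D\<^sup>2))"
    unfolding \<alpha>_def
  proof (rule expected_coupled_contraction_sum_bound[where F = "nat_filt M x"])
    show "subalgebra M (nat_filt M x t)" for t
      using meas by (rule nat_filt_subalgebra)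
    show "AE \<omega> in M. real_cond_exp M (nat_filt M x t) (err (Suc t)) \<omega>
        \<le> (1 - \<rho>1) * err t \<omega> + A * aux t \<omega> + (\<eta>\<^sup>2 * B * D\<^sup>2 + C)" for t
      using err_rec[rule_format, of "Suc t"] by (simp add: err_def[abs_def] aux_def \<eta>_def add.assoc)
    show "AE \<omega> in M. real_cond_exp M (nat_filt M x t) (aux (Suc t)) \<omega>
        \<le> (1 - \<rho>2) * aux t \<omega> + \<eta>\<^sup>2 * E * D\<^sup>2" for t
      using aux_rec[rule_format, of "Suc t"] by (simp add: aux_def[abs_def] \<eta>_def)
  qed (use int \<rho> \<open>0 \<le> A\<close> in \<open>auto simp: err_def[abs_def] aux_def[abs_def]\<close>)
  also have "\<dots> \<le> V0 + \<alpha> * S0 + (B + \<alpha> * E) * D\<^sup>2 + real T * C"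
  proof -
    have "real T * ((\<eta>\<^sup>2 * B * D\<^sup>2 + C) + \<alpha> * (\<eta>\<^sup>2 * E * D\<^sup>2))
        = (real T * \<eta>\<^sup>2) * ((B + \<alpha> * E) * D\<^sup>2) + real T * C"
      by (simp add: algebra_simps)
    moreover have "real T * \<eta>\<^sup>2 = 1"
      using \<open>1 \<le> T\<close> by (simp add: \<eta>_def power_divide)
    moreover have "\<alpha> * expectation (aux 0) \<le> \<alpha> * S0"
      using S0 \<rho> \<open>0 \<le> A\<close> by (intro mult_left_mono) (auto simp: aux_def[abs_def] \<alpha>_def)
    ultimately show ?thesis
      using V0 by (simp add: err_def[abs_def])
  qed
  finally show ?thesis
    by (simp add: err_def[abs_def] \<alpha>_def)
qed

lemma bsfw_expected_min_gap_bound: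
  fixes S :: "'v::real_inner set" and f :: "'v \<Rightarrow> real" and T K :: nat and M :: "'a measure"
    and x m :: "nat \<Rightarrow> 'a \<Rightarrow> 'v" and \<sigma> :: "nat \<Rightarrow> 'a \<Rightarrow> real"
  assumes S: "S \<noteq> {}" "bounded S" "convex S" "S \<subseteq> U"
    and f_deriv: "\<forall>y\<in>U. (f has_derivative (\<lambda>h. inner (grad y) h)) (at y)"
    and lip: "\<forall>y\<in>S. \<forall>z\<in>S. norm (grad y - grad z) \<le> L * norm (y - z)"
    and f_bound: "\<forall>y\<in>S. \<bar>f y\<bar> \<le> F"
    and lmo: "is_lmo S lmo" and "0 < \<delta>"
    and \<rho>: "0 < \<rho>1" "\<rho>1 \<le> 1" "0 < \<rho>2" "\<rho>2 \<le> 1"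
    and ABCE: "A \<ge> 0" "B \<ge> 0" "C \<ge> 0" "E \<ge> 0"
    and "1 \<le> T" "prob_space M"
    and meas: "\<forall>t. x t \<in> borel_measurable M \<and> m t \<in> borel_measurable M \<and> \<sigma> t \<in> borel_measurable M"
    and x0: "\<forall>\<omega>\<in>space M. x 0 \<omega> = lmo minit"
    and x_step: "\<forall>t. \<forall>\<omega>\<in>space M. x (Suc t) \<omega> = bsfw_step lmo K \<delta> (1 / sqrt T) (x t \<omega>) (m t \<omega>)"
    and int: "\<forall>t. integrable M (\<lambda>\<omega>. (norm (m t \<omega> - grad (x t \<omega>)))\<^sup>2)
            \<and> integrable M (\<lambda>\<omega>. (\<sigma> t \<omega>)\<^sup>2)"
    and err_rec: "\<forall>t\<ge>1. AE \<omega> in M.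
          real_cond_exp M (nat_filt M x (t - 1)) (\<lambda>\<omega>. (norm (m t \<omega> - grad (x t \<omega>)))\<^sup>2) \<omega>
            \<le> (1 - \<rho>1) * (norm (m (t - 1) \<omega> - grad (x (t - 1) \<omega>)))\<^sup>2 + A * (\<sigma> (t - 1) \<omega>)\<^sup>2
              + (1 / sqrt T)\<^sup>2 * B * (diameter S)\<^sup>2 + C"
    and aux_rec: "\<forall>t\<ge>1. AE \<omega> in M.
          real_cond_exp M (nat_filt M x (t - 1)) (\<lambda>\<omega>. (\<sigma> t \<omega>)\<^sup>2) \<omega>
            \<le> (1 - \<rho>2) * (\<sigma> (t - 1) \<omega>)\<^sup>2 + (1 / sqrt T)\<^sup>2 * E * (diameter S)\<^sup>2"
    and V0: "prob_space.expectation M (\<lambda>\<omega>. (norm (m 0 \<omega> - grad (x 0 \<omega>)))\<^sup>2) \<le> V0"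
    and S0: "prob_space.expectation M (\<lambda>\<omega>. (\<sigma> 0 \<omega>)\<^sup>2) \<le> S0"
  shows "prob_space.expectation M (\<lambda>\<omega>. Min ((\<lambda>t. fw_gap grad S (x t \<omega>)) ` {0..<T}))
    \<le> (2 * F + \<bar>L\<bar> * (diameter S)\<^sup>2 + diameter S + diameter S
         * (V0 + 2 * A / \<rho>2 * S0 + (B + 2 * A / \<rho>2 * E) * (diameter S)\<^sup>2 + 1) / min \<rho>1 (\<rho>2 / 2))
      * (1 / sqrt T + sqrt C)"
proof -
  interpret prob_space M by fact
  define \<eta> where "\<eta> = 1 / sqrt T"
  define \<kappa> where "\<kappa> = \<eta> + sqrt C"
  define D where "D = diameter S"
  define err where "err t \<omega> = (norm (m t \<omega> - grad (x t \<omega>)))\<^sup>2" for t \<omega>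
  define W where "W = V0 + 2 * A / \<rho>2 * S0 + (B + 2 * A / \<rho>2 * E) * D\<^sup>2"
  have "0 < \<eta>" "\<eta> \<le> 1" "0 < \<kappa>"
    using \<open>1 \<le> T\<close> ABCE(3) by (auto simp: \<eta>_def \<kappa>_def add_pos_nonneg)
  have "0 \<le> D"
    using S(1) diameter_bounded_bound[OF S(2)] by (force simp: D_def)
  have "0 \<le> F"
    using S(1) f_bound by force
  have int_err: "integrable M (err t)" for t
    using int by (simp add: err_def[abs_def])
  have "0 \<le> expectation (\<lambda>\<omega>. (norm (m 0 \<omega> - grad (x 0 \<omega>)))\<^sup>2)"
      "0 \<le> expectation (\<lambda>\<omega>. (\<sigma> 0 \<omega>)\<^sup>2)"
    by simp_all
  then have "0 \<le> V0" "0 \<le> S0"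
    using V0 S0 by linarith+
  then have "0 \<le> W"
    using \<rho> ABCE by (auto simp: W_def intro!: add_nonneg_nonneg mult_nonneg_nonneg)
  have err_sum: "min \<rho>1 (\<rho>2 / 2) * (\<Sum>t<T. expectation (err t)) \<le> W + real T * C"
    using bsfw_expected_error_sum_bound[OF \<open>prob_space M\<close> \<open>1 \<le> T\<close> \<rho> ABCE(1) _ int err_rec aux_rec V0 S0]
      meas by (simp add: W_def err_def[abs_def] D_def)
  define bound where "bound \<omega> = 2 * F / (\<eta> * T) + \<bar>L\<bar> * \<eta> * D\<^sup>2 + D * \<kappa>
      + D / (\<kappa> * T) * (\<Sum>t<T. err t \<omega>)" for \<omega>
  (* the minimal gap need not be integrable: integral_mono' only uses the nonnegative bound *)
  have "expectation (\<lambda>\<omega>. Min ((\<lambda>t. fw_gap grad S (x t \<omega>)) ` {0..<T})) \<le> expectation bound"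
  proof (rule integral_mono')
    fix \<omega> assume "\<omega> \<in> space M"
    show "Min ((\<lambda>t. fw_gap grad S (x t \<omega>)) ` {0..<T}) \<le> bound \<omega>"
      unfolding bound_def err_def D_def
      using x0 x_step \<open>\<omega> \<in> space M\<close> lmo_mem[OF lmo]
      by (intro bsfw_min_gap_bound[OF S f_deriv lip f_bound lmo \<open>0 < \<delta>\<close> \<open>0 < \<eta>\<close> \<open>\<eta> \<le> 1\<close>
            \<open>1 \<le> T\<close> \<open>0 < \<kappa>\<close>]) (auto simp: \<eta>_def)
    show "0 \<le> bound \<omega>"
      using \<open>0 \<le> F\<close> \<open>0 \<le> D\<close> \<open>0 < \<eta>\<close> \<open>0 < \<kappa>\<close> by (simp add: bound_def err_def sum_nonneg)
  qed (use int_err in \<open>simp add: bound_def[abs_def]\<close>)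
  also have "expectation bound = 2 * F / (\<eta> * T) + \<bar>L\<bar> * \<eta> * D\<^sup>2 + D * \<kappa>
      + D / (\<kappa> * T) * (\<Sum>t<T. expectation (err t))"
    using int_err by (simp add: bound_def[abs_def] prob_space)
  also have "\<dots> \<le> (2 * F + \<bar>L\<bar> * D\<^sup>2 + D + D * (W + 1) / min \<rho>1 (\<rho>2 / 2)) * (\<eta> + sqrt C)"
    unfolding \<kappa>_def \<eta>_def
    using \<rho> by (intro bsfw_rate_arith[OF \<open>1 \<le> T\<close> ABCE(3) \<open>0 \<le> F\<close> \<open>0 \<le> D\<close> _ \<open>0 \<le> W\<close> err_sum]) simp
  finally show ?thesis
    by (simp add: \<eta>_def D_def W_def)
qed

theorem theorem5:
  fixes S :: "(real ^ 'n) set"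
    and f :: "real ^ 'n \<Rightarrow> real" and grad :: "real ^ 'n \<Rightarrow> real ^ 'n"
    and U :: "(real ^ 'n) set"
    and L \<delta> \<rho>1 \<rho>2 A B C E V0 S0 :: real
    and K :: nat
    and lmo :: "real ^ 'n \<Rightarrow> real ^ 'n" and minit :: "real ^ 'n"
  assumes S: "S \<noteq> {}" "compact S" "convex S"
    and U: "open U" "S \<subseteq> U"
    and f_deriv: "\<forall>y\<in>U. (f has_derivative (\<lambda>h. inner (grad y) h)) (at y)"
    and grad_cont: "continuous_on U grad"
    and grad_lip: "\<forall>y\<in>S. \<forall>z\<in>S. norm (grad y - grad z) \<le> L * norm (y - z)"
    and K: "K \<ge> 1" and \<delta>: "0 < \<delta>" "\<delta> \<le> 1"
    and lmo: "is_lmo S lmo"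
    and \<rho>: "0 < \<rho>1" "\<rho>1 \<le> 1" "0 < \<rho>2" "\<rho>2 \<le> 1"
    and ABCE: "A \<ge> 0" "B \<ge> 0" "C \<ge> 0" "E \<ge> 0"
  shows "\<exists>K0::real. \<forall>T::nat. \<forall>(M::'a measure) x m \<sigma>.
     T \<ge> 1 \<and> prob_space M
     \<and> (\<forall>t. x t \<in> borel_measurable M \<and> m t \<in> borel_measurable M \<and> \<sigma> t \<in> borel_measurable M)
     \<and> (\<forall>\<omega>\<in>space M. x 0 \<omega> = lmo minit)
     \<and> (\<forall>t. \<forall>\<omega>\<in>space M. x (Suc t) \<omega> = bsfw_step lmo K \<delta> (1 / sqrt T) (x t \<omega>) (m t \<omega>))
     \<and> (\<forall>t. integrable M (\<lambda>\<omega>. (norm (m t \<omega> - grad (x t \<omega>)))\<^sup>2)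
            \<and> integrable M (\<lambda>\<omega>. (\<sigma> t \<omega>)\<^sup>2))
     \<and> (\<forall>t\<ge>1. AE \<omega> in M.
          real_cond_exp M (nat_filt M x (t - 1)) (\<lambda>\<omega>. (norm (m t \<omega> - grad (x t \<omega>)))\<^sup>2) \<omega>
            \<le> (1 - \<rho>1) * (norm (m (t - 1) \<omega> - grad (x (t - 1) \<omega>)))\<^sup>2 + A * (\<sigma> (t - 1) \<omega>)\<^sup>2
              + (1 / sqrt T)\<^sup>2 * B * (diameter S)\<^sup>2 + C)
     \<and> (\<forall>t\<ge>1. AE \<omega> in M.
          real_cond_exp M (nat_filt M x (t - 1)) (\<lambda>\<omega>. (\<sigma> t \<omega>)\<^sup>2) \<omega>
            \<le> (1 - \<rho>2) * (\<sigma> (t - 1) \<omega>)\<^sup>2 + (1 / sqrt T)\<^sup>2 * E * (diameter S)\<^sup>2)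
     \<and> prob_space.expectation M (\<lambda>\<omega>. (norm (m 0 \<omega> - grad (x 0 \<omega>)))\<^sup>2) \<le> V0
     \<and> prob_space.expectation M (\<lambda>\<omega>. (\<sigma> 0 \<omega>)\<^sup>2) \<le> S0
     \<longrightarrow> prob_space.expectation M (\<lambda>\<omega>. Min ((\<lambda>t. fw_gap grad S (x t \<omega>)) ` {0..<T}))
           \<le> K0 * (1 / sqrt T + sqrt C)"
proof -
  have "bounded S"
    using S(2) by (rule compact_imp_bounded)
  have "continuous_on S f"
    using U(2) f_deriv by (intro continuous_at_imp_continuous_on) (auto dest: has_derivative_continuous)
  then have "bounded (f ` S)"
    using S(2) by (intro compact_imp_bounded compact_continuous_image)
  then obtain F where F: "\<forall>y\<in>S. \<bar>f y\<bar> \<le> F"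
    unfolding bounded_iff by auto
  (* the witness K0 is the constant of bsfw_expected_min_gap_bound, found by unification *)
  show ?thesis
    by (rule exI, intro allI impI, elim conjE, rule bsfw_expected_min_gap_bound[OF S(1) \<open>bounded S\<close>
          S(3) U(2) f_deriv grad_lip F lmo \<delta>(1) \<rho> ABCE])
qed

end
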